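(* Let $x\in\mathbb{R}$ and let $f:\mathbb{R}\to\mathbb{R}$ be analytic and nonzero on the closed interval between $0$ and $x$, with $f(0)=1$, and suppose $f(y)=\exp\big(\sum_{i=1}^{\infty}c_i y^i\big)$ for all $y$ in that interval, the series converging there; put $f_k(y)=\exp(c_k y^k)$. For $r>1$, a finite nonempty set $\mathcal{S}\subset\mathbb{N}^*$ and a family of positive integers $(n_j)_{j\in\mathcal{S}}$, write \[ \mathcal{S}\circ x=\Big[\prod_{j\in\mathcal{S}}\frac{(r^j-1)^{1/j}}{r^{n_j}}\Big]x . \] Then for every positive integer $k$, \[ f_k(x)=\lim_{r\downarrow1}\ \frac{\prod_{\mathcal{S}:\,\max\mathcal{S}=k,\ |\mathcal{S}|\text{ odd}}\ \prod_{(n_j)_{j\in\mathcal{S}},\,n_j\ge1} f(\mathcal{S}\circ x)}{\prod_{\mathcal{S}:\,\max\mathcal{S}=k,\ |\mathcal{S}|\text{ even}}\ \prod_{(n_j)_{j\in\mathcal{S}},\,n_j\ge1} f(\mathcal{S}\circ x)}, \] where $\mathcal{S}$ ranges over subsets of $\mathbb{N}^*$ whose largest element is $k$, and for each such $\mathcal{S}$ all indices $n_j$, $j\in\mathcal{S}$, range independently over the positive integers.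
   Context: $\mathbb{N}^*$ is the set of positive integers. The $c_i$ are the Taylor coefficients at $0$ of $\log f$ and $f_k$ is called the $k$-th component of $f$. *)

theory Defs
  imports "HOL-Analysis.Analysis"
begin

definition real_analytic_on :: "(real \<Rightarrow> real) \<Rightarrow> real set \<Rightarrow> bool" where
  "real_analytic_on f A \<longleftrightarrow>
     (\<forall>a\<in>A. \<exists>\<rho>>0. \<exists>b::nat \<Rightarrow> real.
        \<forall>y. \<bar>y - a\<bar> < \<rho> \<longrightarrow> (\<lambda>n. b n * (y - a) ^ n) sums f y)"

definition between0 :: "real \<Rightarrow> real set" where
  "between0 x = {min 0 x .. max 0 x}"

definition has_prod_on :: "('a \<Rightarrow> real) \<Rightarrow> 'a set \<Rightarrow> real \<Rightarrow> bool" where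
  "has_prod_on g A P \<longleftrightarrow> ((\<lambda>F. prod g F) \<longlongrightarrow> P) (finite_subsets_at_top A)"

definition prod_on :: "('a \<Rightarrow> real) \<Rightarrow> 'a set \<Rightarrow> real" where
  "prod_on g A = (THE P. has_prod_on g A P)"

definition scomp :: "real \<Rightarrow> nat set \<Rightarrow> (nat \<Rightarrow> nat) \<Rightarrow> real \<Rightarrow> real" where
  "scomp r S n x = (\<Prod>j\<in>S. (r ^ j - 1) powr (1 / real j) / r ^ (n j)) * x"

definition families :: "nat set \<Rightarrow> (nat \<Rightarrow> nat) set" where
  "families S = PiE S (\<lambda>_. {1..})"

end

theory Submission
  imports Defs
begin

(*
  Put a_j = (r^j - 1)^(1/j) (scale_factor r j), so that S o x = x * prod_{j in S} a_j / r^(n_j).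
  Expanding log f into its power series turns the logarithm of the product of f (S o x) over all
  families (n_j) into a double series. All factors except c_m x^m are nonnegative, so the double
  series may be summed over the families first, and the geometric series in the n_j give

    log prod_n f (S o x) = sum_m c_m x^m prod_{j in S} w_j(m),    w_j(m) = a_j^m / (r^m - 1)

  (w_j(m) = weight r j m). The alternating sum over the sets S with max S = k factors as
  c_m x^m w_k(m) prod_{j<k} (1 - w_j(m)). Since w_m(m) = 1, the terms with m < k vanish, and as r
  decreases to 1, w_j(m) <= a_j^(m-j) -> 0 for j < m, so only c_k x^k survives. The bound
  a_k^(m-k) <= 2^(k-m), valid for r close to 1, lets Tannery's theorem interchange limit and sum.
*)

lemma has_sum_inverse_power_from_1:
  fixes q :: real
  assumes "1 < q"
  shows "((\<lambda>n. inverse q ^ n) has_sum 1 / (q - 1)) {1..}"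
proof -
  have "norm (inverse q) < 1"
    using assms by (simp add: inverse_less_1_iff)
  from has_sum_geometric_from_1[OF this] show ?thesis
    using assms by (simp add: field_simps)
qed

lemma has_sum_prod_PiE_nonneg:
  fixes h :: "'a \<Rightarrow> 'b \<Rightarrow> real"
  assumes "finite S"
    and countable: "\<And>j. j \<in> S \<Longrightarrow> countable (B j)"
    and has_sum: "\<And>j. j \<in> S \<Longrightarrow> (h j has_sum s j) (B j)"
    and nonneg: "\<And>j y. j \<in> S \<Longrightarrow> y \<in> B j \<Longrightarrow> 0 \<le> h j y"
  shows "((\<lambda>g. \<Prod>j\<in>S. h j (g j)) has_sum (\<Prod>j\<in>S. s j)) (PiE S B)"
proof -
  have summable: "h j summable_on B j" if "j \<in> S" for j
    using has_sum[OF that] by (auto simp: summable_on_def)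
  have "(\<lambda>y. norm (h j y)) summable_on B j" if "j \<in> S" for j
    using summable[OF that] nonneg[OF that] by (simp cong: summable_on_cong)
  then have "Infinite_Set_Sum.abs_summable_on (\<lambda>g. \<Prod>j\<in>S. h j (g j)) (PiE S B)"
    using assms(1) countable
    by (intro abs_summable_on_prod_PiE) (auto simp flip: abs_summable_equivalent)
  then have "(\<lambda>g. norm (\<Prod>j\<in>S. h j (g j))) summable_on PiE S B"
    by (rule abs_summable_equivalent [THEN iffD2])
  then have "(\<lambda>g. \<Prod>j\<in>S. h j (g j)) summable_on PiE S B"
    by (rule abs_summable_summable)
  moreover have "infsum (\<lambda>g. \<Prod>j\<in>S. h j (g j)) (PiE S B) = (\<Prod>j\<in>S. infsum (h j) (B j))"
    by (rule infsum_prod_PiE[OF assms(1) summable calculation])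
  moreover have "(\<Prod>j\<in>S. infsum (h j) (B j)) = (\<Prod>j\<in>S. s j)"
    using has_sum by (intro prod.cong refl) (simp add: infsumI)
  ultimately show ?thesis
    by (simp add: has_sum_iff)
qed

lemma has_sum_suminf_swap:
  fixes d :: "nat \<Rightarrow> real" and u :: "nat \<Rightarrow> 'a \<Rightarrow> real"
  assumes u: "\<And>i. (u i has_sum U i) A"
    and u_nonneg: "\<And>i n. n \<in> A \<Longrightarrow> 0 \<le> u i n"
    and summable: "summable (\<lambda>i. \<bar>d i\<bar> * U i)"
  shows "((\<lambda>n. \<Sum>i. d i * u i n) has_sum (\<Sum>i. d i * U i)) A"
proof -
  define T where "T = (\<lambda>(i, n). d i * u i n)"
  have U_nonneg: "0 \<le> U i" for i
    using u u_nonneg by (rule has_sum_nonneg)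
  have rows: "((\<lambda>n. T (i, n)) has_sum d i * U i) A" for i
    unfolding T_def using has_sum_cmult_right[OF u] by simp
  have "((\<lambda>n. \<bar>T (i, n)\<bar>) has_sum \<bar>d i\<bar> * U i) A" for i
  proof -
    have "\<bar>T (i, n)\<bar> = \<bar>d i\<bar> * u i n" if "n \<in> A" for n
      using u_nonneg[OF that] by (simp add: T_def abs_mult)
    then show ?thesis
      using has_sum_cmult_right[OF u] by (rule has_sum_cong [THEN iffD2])
  qed
  moreover have "(\<lambda>i. \<bar>d i\<bar> * U i) summable_on UNIV"
    using summable U_nonneg by (intro summable_nonneg_imp_summable_on) auto
  ultimately have "(\<lambda>p. \<bar>T p\<bar>) summable_on UNIV \<times> A"
    by (intro summable_on_SigmaI) auto
  then have "T summable_on UNIV \<times> A"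
    using abs_summable_summable[of T "UNIV \<times> A"] by simp
  then obtain total where total: "(T has_sum total) (UNIV \<times> A)"
    by (auto simp: summable_on_def)
  have "((\<lambda>i. d i * U i) has_sum total) UNIV"
    using total rows by (rule has_sum_Sigma')
  then have "(\<Sum>i. d i * U i) = total"
    by (intro sums_unique [symmetric] has_sum_imp_sums)
  moreover have swapped: "((\<lambda>(n, i). T (i, n)) has_sum total) (A \<times> UNIV)"
    using total has_sum_swap by blast
  have "((\<lambda>i. T (i, n)) has_sum (\<Sum>i. d i * u i n)) UNIV" if "n \<in> A" for n
  proof -
    have "(\<lambda>i. T (i, n)) summable_on UNIV"
      using summable_on_SigmaD1[of "\<lambda>n i. T (i, n)" A "\<lambda>_. UNIV" n] swapped that
      by (auto simp: summable_on_def)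
    then have "((\<lambda>i. T (i, n)) has_sum infsum (\<lambda>i. T (i, n)) UNIV) UNIV"
      by simp
    moreover from this have "infsum (\<lambda>i. T (i, n)) UNIV = (\<Sum>i. d i * u i n)"
      unfolding T_def by (intro sums_unique has_sum_imp_sums) simp
    ultimately show ?thesis
      by simp
  qed
  with swapped have "((\<lambda>n. \<Sum>i. d i * u i n) has_sum total) A"
    by (intro has_sum_Sigma'[where f = "\<lambda>(n, i). T (i, n)"]) auto
  ultimately show ?thesis
    by simp
qed

lemma summable_abs_mult_power_diff:
  fixes d :: "nat \<Rightarrow> real"
  assumes "summable d" "0 < s" "s < 1"
  shows "summable (\<lambda>i. \<bar>d i\<bar> * s ^ (i - m))"
proof (rule summable_comparison_test')
  have "summable (\<lambda>i. norm (d i * s ^ i))"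
    using powser_insidea[of d 1 s] assms by simp
  then show "summable (\<lambda>i. \<bar>d i\<bar> * s ^ i / s ^ m)"
    using assms(2) by (intro summable_divide) (simp add: abs_mult power_abs)
  fix i
  assume "m \<le> i"
  then show "norm (\<bar>d i\<bar> * s ^ (i - m)) \<le> \<bar>d i\<bar> * s ^ i / s ^ m"
    using assms by (simp add: power_diff)
qed

lemma has_prod_on_exp:
  assumes "(L has_sum s) A"
  shows "has_prod_on (\<lambda>n. exp (L n)) A (exp s)"
proof -
  have "((\<lambda>F. exp (sum L F)) \<longlongrightarrow> exp s) (finite_subsets_at_top A)"
    using assms unfolding has_sum_def by (rule tendsto_exp)
  moreover have "\<forall>\<^sub>F F in finite_subsets_at_top A. exp (sum L F) = (\<Prod>n\<in>F. exp (L n))"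
    by (intro eventually_finite_subsets_at_top_weakI) (simp add: exp_sum)
  ultimately show ?thesis
    unfolding has_prod_on_def by (simp add: tendsto_cong)
qed

lemma prod_on_eqI:
  assumes "has_prod_on g A P"
  shows "prod_on g A = P"
  unfolding prod_on_def
proof (rule the_equality)
  fix Q
  assume "has_prod_on g A Q"
  with assms show "Q = P"
    unfolding has_prod_on_def by (intro tendsto_unique[OF finite_subsets_at_top_neq_bot])
qed (rule assms)

lemma self_in_between0: "x \<in> between0 x"
  by (simp add: between0_def)

lemma mult_in_between0:
  fixes l x :: real
  assumes "0 \<le> l" "l \<le> 1"
  shows "l * x \<in> between0 x"
proof (cases "0 \<le> x")
  case True
  then show ?thesis
    using assms mult_right_mono[of l 1 x] by (simp add: between0_def)
next
  case False
  then show ?thesis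
    using assms mult_right_mono_neg[of l 1 x] by (simp add: between0_def mult_nonneg_nonpos)
qed

lemma sum_subsets_with_max_alternating_prod:
  fixes g :: "nat \<Rightarrow> 'a::comm_ring_1"
  assumes "1 \<le> k"
  shows "(\<Sum>S\<in>{S. S \<subseteq> {1..k} \<and> k \<in> S}. (-1) ^ Suc (card S) * (\<Prod>j\<in>S. g j))
       = g k * (\<Prod>j\<in>{1..<k}. 1 - g j)"
proof -
  have subsets: "{S. S \<subseteq> {1..k} \<and> k \<in> S} = insert k ` Pow {1..<k}"
  proof (intro equalityI subsetI)
    fix S
    assume "S \<in> {S. S \<subseteq> {1..k} \<and> k \<in> S}"
    then have "S = insert k (S - {k})" "S - {k} \<in> Pow {1..<k}"
      by auto
    then show "S \<in> insert k ` Pow {1..<k}"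
      by blast
  qed (use assms in auto)
  have "inj_on (insert k) (Pow {1..<k})"
    by (rule inj_onI) (metis Pow_iff atLeastLessThan_iff insert_ident less_irrefl subsetD)
  then have "(\<Sum>S\<in>{S. S \<subseteq> {1..k} \<and> k \<in> S}. (-1) ^ Suc (card S) * (\<Prod>j\<in>S. g j))
      = (\<Sum>T\<in>Pow {1..<k}. (-1) ^ Suc (card (insert k T)) * (\<Prod>j\<in>insert k T. g j))"
    unfolding subsets by (simp add: sum.reindex)
  also have "\<dots> = (\<Sum>T\<in>Pow {1..<k}. g k * ((\<Prod>j\<in>T. - g j) * (\<Prod>j\<in>{1..<k} - T. 1)))"
  proof (intro sum.cong refl)
    fix T
    assume "T \<in> Pow {1..<k}"
    then have "finite T" "k \<notin> T"
      using finite_subset by auto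
    moreover have "(\<Prod>j\<in>T. - g j) = (-1) ^ card T * (\<Prod>j\<in>T. g j)"
      using prod.distrib[of "\<lambda>_. - 1" g T] by simp
    ultimately show "(-1) ^ Suc (card (insert k T)) * (\<Prod>j\<in>insert k T. g j)
        = g k * ((\<Prod>j\<in>T. - g j) * (\<Prod>j\<in>{1..<k} - T. 1))"
      by simp
  qed
  also have "\<dots> = g k * (\<Sum>T\<in>Pow {1..<k}. (\<Prod>j\<in>T. - g j) * (\<Prod>j\<in>{1..<k} - T. 1))"
    by (simp only: sum_distrib_left)
  also have "(\<Sum>T\<in>Pow {1..<k}. (\<Prod>j\<in>T. - g j) * (\<Prod>j\<in>{1..<k} - T. 1))
      = (\<Prod>j\<in>{1..<k}. - g j + 1)"
    by (rule prod_add [symmetric]) simp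
  finally show ?thesis
    by simp
qed

lemma prod_odd_div_prod_even_exp:
  fixes G :: "'a set \<Rightarrow> real"
  assumes "finite {S. P S}"
  shows "(\<Prod>S\<in>{S. P S \<and> odd (card S)}. exp (G S)) / (\<Prod>S\<in>{S. P S \<and> even (card S)}. exp (G S))
    = exp (\<Sum>S\<in>{S. P S}. (-1) ^ Suc (card S) * G S)"
proof -
  have "(\<Sum>S\<in>{S. P S}. (-1) ^ Suc (card S) * G S)
      = (\<Sum>S\<in>{S. P S}. if odd (card S) then G S else - G S)"
    by (intro sum.cong refl) auto
  also have "\<dots> = (\<Sum>S\<in>{S. P S \<and> odd (card S)}. G S) - (\<Sum>S\<in>{S. P S \<and> even (card S)}. G S)"
  proof -
    have "{S. P S} \<inter> {S. odd (card S)} = {S. P S \<and> odd (card S)}"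
      "{S. P S} \<inter> - {S. odd (card S)} = {S. P S \<and> even (card S)}"
      by auto
    then show ?thesis
      by (simp add: sum.If_cases[OF assms] sum_negf)
  qed
  finally show ?thesis
    using assms by (simp add: exp_diff exp_sum)
qed

definition scale_factor :: "real \<Rightarrow> nat \<Rightarrow> real" where
  "scale_factor r j = (r ^ j - 1) powr (1 / real j)"

definition weight :: "real \<Rightarrow> nat \<Rightarrow> nat \<Rightarrow> real" where
  "weight r j m = scale_factor r j ^ m / (r ^ m - 1)"

lemma scale_factor_pos:
  assumes "1 < r" "1 \<le> j"
  shows "0 < scale_factor r j"
proof -
  have "1 < r ^ j"
    using assms by (simp add: one_less_power)
  then show ?thesis
    by (simp add: scale_factor_def)
qed

lemma scale_factor_power:
  assumes "1 < r" "1 \<le> j"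
  shows "scale_factor r j ^ j = r ^ j - 1"
proof -
  have "0 < r ^ j - 1"
    using assms by (simp add: one_less_power)
  have "scale_factor r j ^ j = scale_factor r j powr real j"
    using scale_factor_pos[OF assms] by (simp add: powr_realpow)
  also have "\<dots> = (r ^ j - 1) powr (1 / real j * real j)"
    unfolding scale_factor_def by (simp add: powr_powr)
  also have "\<dots> = r ^ j - 1"
    using assms \<open>0 < r ^ j - 1\<close> by simp
  finally show ?thesis .
qed

lemma scale_factor_less_1:
  assumes "1 < r" "1 \<le> j" "r ^ j < 2"
  shows "scale_factor r j < 1"
proof (rule ccontr)
  assume "\<not> scale_factor r j < 1"
  then have "1 \<le> scale_factor r j ^ j"
    by (simp add: one_le_power)
  with scale_factor_power[OF assms(1,2)] assms(3) show False
    by simp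
qed

lemma scale_factor_tendsto_0:
  assumes "1 \<le> j"
  shows "((\<lambda>r. scale_factor r j) \<longlongrightarrow> 0) (at_right 1)"
  unfolding scale_factor_def
proof (rule tendsto_zero_powrI)
  have "((\<lambda>r::real. r ^ j - 1) \<longlongrightarrow> 1 ^ j - 1) (at_right 1)"
    by (intro tendsto_intros)
  then show "((\<lambda>r::real. r ^ j - 1) \<longlongrightarrow> 0) (at_right 1)"
    by simp
  show "\<forall>\<^sub>F r in at_right 1. 0 \<le> r ^ j - (1::real)"
    using eventually_at_right_less[of "1::real"]
    by eventually_elim (simp add: one_le_power)
qed (use assms in auto)

lemma eventually_power_less_2_at_right_1:
  "\<forall>\<^sub>F r in at_right 1. 1 < r \<and> r ^ k < (2::real)"
proof -
  have "((\<lambda>r::real. r ^ k) \<longlongrightarrow> 1 ^ k) (at_right 1)"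
    by (intro tendsto_intros)
  then have "\<forall>\<^sub>F r in at_right 1. r ^ k < (2::real)"
    by (intro order_tendstoD(2)) auto
  with eventually_at_right_less[of "1::real"] show ?thesis
    by eventually_elim simp
qed

lemma weight_self:
  assumes "1 < r" "1 \<le> j"
  shows "weight r j j = 1"
proof -
  have "1 < r ^ j"
    using assms by (simp add: one_less_power)
  with scale_factor_power[OF assms] show ?thesis
    by (simp add: weight_def)
qed

lemma weight_nonneg:
  assumes "1 < r" "1 \<le> m"
  shows "0 \<le> weight r j m"
  using assms by (simp add: weight_def scale_factor_def one_less_power)

lemma weight_le_scale_factor_power:
  assumes "1 < r" "1 \<le> j" "j \<le> m"
  shows "weight r j m \<le> scale_factor r j ^ (m - j)"
proof -
  have "scale_factor r j ^ m = scale_factor r j ^ j * scale_factor r j ^ (m - j)"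
    using assms by (simp flip: power_add)
  also have "\<dots> = (r ^ j - 1) * scale_factor r j ^ (m - j)"
    using scale_factor_power[OF assms(1,2)] by simp
  also have "\<dots> \<le> (r ^ m - 1) * scale_factor r j ^ (m - j)"
    using assms scale_factor_pos[OF assms(1,2)] by (intro mult_right_mono power_increasing) auto
  finally show ?thesis
    using assms by (simp add: weight_def divide_le_eq one_less_power mult.commute)
qed

lemma weight_le_1:
  assumes "1 < r" "1 \<le> j" "j \<le> m" "r ^ j < 2"
  shows "weight r j m \<le> 1"
proof -
  have "scale_factor r j ^ (m - j) \<le> 1"
    using scale_factor_pos[OF assms(1,2)] scale_factor_less_1[OF assms(1,2,4)]
    by (intro power_le_one) auto
  with weight_le_scale_factor_power[OF assms(1-3)] show ?thesis
    by linarith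
qed

lemma weight_tendsto_0:
  assumes "1 \<le> j" "j < m"
  shows "((\<lambda>r. weight r j m) \<longlongrightarrow> 0) (at_right 1)"
proof (rule tendsto_sandwich)
  show "\<forall>\<^sub>F r in at_right 1. 0 \<le> weight r j m"
    using eventually_at_right_less[of "1::real"]
    by eventually_elim (use assms in \<open>auto intro: weight_nonneg\<close>)
  show "\<forall>\<^sub>F r in at_right 1. weight r j m \<le> scale_factor r j ^ (m - j)"
    using eventually_at_right_less[of "1::real"]
    by eventually_elim (use assms in \<open>auto intro: weight_le_scale_factor_power\<close>)
  have "((\<lambda>r. scale_factor r j ^ (m - j)) \<longlongrightarrow> 0 ^ (m - j)) (at_right 1)"
    using scale_factor_tendsto_0[OF assms(1)] by (rule tendsto_power)
  moreover have "(0::real) ^ (m - j) = 0"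
    using assms by simp
  ultimately show "((\<lambda>r. scale_factor r j ^ (m - j)) \<longlongrightarrow> 0) (at_right 1)"
    by (simp only:)
qed simp

lemma scomp_power:
  "scomp r S n x ^ m = x ^ m * (\<Prod>j\<in>S. scale_factor r j ^ m * inverse (r ^ m) ^ n j)"
proof -
  have "(scale_factor r j / r ^ n j) ^ m = scale_factor r j ^ m * inverse (r ^ m) ^ n j" for j
    by (simp add: divide_inverse power_mult_distrib power_inverse mult.commute flip: power_mult)
  then show ?thesis
    by (simp add: scomp_def scale_factor_def power_mult_distrib prod_power_distrib)
qed

lemma scomp_in_between0:
  assumes "1 < r" "r ^ k < 2" "S \<subseteq> {1..k}"
  shows "scomp r S n x \<in> between0 x"
proof -
  have "0 \<le> scale_factor r j / r ^ n j \<and> scale_factor r j / r ^ n j \<le> 1" if "j \<in> S" for j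
  proof -
    have j: "1 \<le> j" "r ^ j \<le> r ^ k"
      using assms that by (auto intro: power_increasing)
    have "scale_factor r j < 1"
      using scale_factor_less_1[OF assms(1) j(1)] j(2) assms(2) by linarith
    moreover have "1 \<le> r ^ n j"
      using assms(1) by (simp add: one_le_power)
    ultimately show ?thesis
      using scale_factor_pos[OF assms(1) j(1)] by (simp add: divide_le_eq)
  qed
  then have "(\<Prod>j\<in>S. scale_factor r j / r ^ n j) * x \<in> between0 x"
    by (intro mult_in_between0 prod_nonneg prod_le_1) auto
  then show ?thesis
    by (simp add: scomp_def scale_factor_def)
qed

definition log_prod :: "(nat \<Rightarrow> real) \<Rightarrow> real \<Rightarrow> real \<Rightarrow> nat set \<Rightarrow> real" where
  "log_prod c x r S = (\<Sum>i. c (Suc i) * x ^ Suc i * (\<Prod>j\<in>S. weight r j (Suc i)))"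

lemma prod_weight_le:
  assumes "1 < r" "r ^ k < 2" "S \<subseteq> {1..k}" "k \<in> S" "k \<le> m"
  shows "(\<Prod>j\<in>S. weight r j m) \<le> scale_factor r k ^ (m - k)"
proof -
  have "finite S"
    using assms(3) finite_subset by blast
  have "0 \<le> weight r j m \<and> weight r j m \<le> 1" if "j \<in> S - {k}" for j
  proof -
    have j: "1 \<le> j" "j \<le> m"
      using assms that by auto
    have "r ^ j \<le> r ^ k"
      using assms that by (intro power_increasing) auto
    with assms(2) have "r ^ j < 2"
      by linarith
    with j assms(1) show ?thesis
      using weight_nonneg[of r m j] weight_le_1[of r j m] by simp
  qed
  then have "(\<Prod>j\<in>S - {k}. weight r j m) \<le> 1" "0 \<le> (\<Prod>j\<in>S - {k}. weight r j m)"
    by (auto intro: prod_le_1 prod_nonneg)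
  moreover have "0 \<le> weight r k m"
    using assms by (intro weight_nonneg) auto
  ultimately have "(\<Prod>j\<in>S. weight r j m) \<le> weight r k m"
    using \<open>finite S\<close> assms(4) by (simp add: prod.remove mult_left_le)
  also have "\<dots> \<le> scale_factor r k ^ (m - k)"
    using assms by (intro weight_le_scale_factor_power) auto
  finally show ?thesis .
qed

lemma summable_abs_mult_prod_weight:
  fixes d :: "nat \<Rightarrow> real"
  assumes "summable d" "1 < r" "r ^ k < 2" "S \<subseteq> {1..k}" "k \<in> S"
  shows "summable (\<lambda>i. \<bar>d i\<bar> * (\<Prod>j\<in>S. weight r j (Suc i)))"
proof (rule summable_comparison_test')
  have k: "1 \<le> k"
    using assms(4,5) by auto
  show "summable (\<lambda>i. \<bar>d i\<bar> * scale_factor r k ^ (i - (k - 1)))"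
    using scale_factor_pos[OF assms(2) k] scale_factor_less_1[OF assms(2) k assms(3)]
    by (intro summable_abs_mult_power_diff assms(1))
  fix i
  assume "k - 1 \<le> i"
  moreover have "0 \<le> (\<Prod>j\<in>S. weight r j (Suc i))"
    using assms(2,4) by (intro prod_nonneg weight_nonneg) auto
  ultimately show "norm (\<bar>d i\<bar> * (\<Prod>j\<in>S. weight r j (Suc i)))
      \<le> \<bar>d i\<bar> * scale_factor r k ^ (i - (k - 1))"
    using prod_weight_le[OF assms(2-5), of "Suc i"] k
    by (simp add: abs_mult mult_left_mono Suc_diff_le)
qed

lemma log_prod_has_sum:
  assumes "summable (\<lambda>i. c (Suc i) * x ^ Suc i)" "1 < r" "r ^ k < 2" "S \<subseteq> {1..k}" "k \<in> S"
  shows "((\<lambda>n. \<Sum>i. c (Suc i) * scomp r S n x ^ Suc i) has_sum log_prod c x r S) (families S)"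
proof -
  define u where "u i n = (\<Prod>j\<in>S. scale_factor r j ^ Suc i * inverse (r ^ Suc i) ^ n j)"
    for i and n :: "nat \<Rightarrow> nat"
  have "finite S"
    using assms(4) finite_subset by blast
  have "((\<lambda>m. scale_factor r j ^ Suc i * inverse (r ^ Suc i) ^ m) has_sum weight r j (Suc i)) {1..}"
    for i j
  proof -
    have "1 < r ^ Suc i"
      using assms(2) by (rule one_less_power) simp
    from has_sum_cmult_right[OF has_sum_inverse_power_from_1[OF this]] show ?thesis
      by (simp add: weight_def)
  qed
  then have "(u i has_sum (\<Prod>j\<in>S. weight r j (Suc i))) (families S)" for i
    unfolding u_def families_def using \<open>finite S\<close> assms(2)
    by (intro has_sum_prod_PiE_nonneg) (auto simp: scale_factor_def)
  moreover have "0 \<le> u i n" for i n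
    using assms(2) by (auto simp: u_def scale_factor_def intro!: prod_nonneg)
  ultimately have "((\<lambda>n. \<Sum>i. c (Suc i) * x ^ Suc i * u i n) has_sum log_prod c x r S) (families S)"
    unfolding log_prod_def
    using summable_abs_mult_prod_weight[OF assms(1-5)] by (intro has_sum_suminf_swap) auto
  then show ?thesis
    by (simp only: u_def scomp_power mult.assoc)
qed

lemma has_prod_on_families:
  assumes series: "\<forall>y\<in>between0 x. summable (\<lambda>i. c (Suc i) * y ^ Suc i) \<and>
                    f y = exp (\<Sum>i. c (Suc i) * y ^ Suc i)"
    and "1 < r" "r ^ k < 2" "S \<subseteq> {1..k}" "k \<in> S"
  shows "has_prod_on (\<lambda>n. f (scomp r S n x)) (families S) (exp (log_prod c x r S))"
proof -
  have "summable (\<lambda>i. c (Suc i) * x ^ Suc i)"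
    using series self_in_between0 by blast
  from has_prod_on_exp[OF log_prod_has_sum[OF this assms(2-5)]] show ?thesis
    using series scomp_in_between0[OF assms(2-4)] by simp
qed

definition alt_weight :: "nat \<Rightarrow> real \<Rightarrow> nat \<Rightarrow> real" where
  "alt_weight k r m = weight r k m * (\<Prod>j\<in>{1..<k}. 1 - weight r j m)"

lemma alt_weight_eq_0:
  assumes "1 < r" "1 \<le> m" "m < k"
  shows "alt_weight k r m = 0"
proof -
  have "m \<in> {1..<k}" "1 - weight r m m = 0"
    using assms weight_self[OF assms(1,2)] by auto
  then show ?thesis
    unfolding alt_weight_def by (metis finite_atLeastLessThan mult_zero_right prod_zero_iff)
qed

lemma alt_weight_bound:
  assumes "1 < r" "r ^ k < 2" "1 \<le> k" "1 \<le> m"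
  shows "\<bar>alt_weight k r m\<bar> \<le> scale_factor r k ^ (m - k)"
proof (cases "m < k")
  case True
  then show ?thesis
    using alt_weight_eq_0[OF assms(1,4) True] by simp
next
  case False
  have "\<bar>1 - weight r j m\<bar> \<le> 1" if "j \<in> {1..<k}" for j
  proof -
    have "r ^ j \<le> r ^ k"
      using assms(1) that by (intro power_increasing) auto
    with assms(2) have "r ^ j < 2"
      by linarith
    with that False assms(1,4) show ?thesis
      using weight_nonneg[of r m j] weight_le_1[of r j m] by simp
  qed
  then have "\<bar>\<Prod>j\<in>{1..<k}. 1 - weight r j m\<bar> \<le> 1"
    unfolding abs_prod by (intro prod_le_1) auto
  moreover have "0 \<le> weight r k m"
    using assms(1,4) by (rule weight_nonneg)
  ultimately have "\<bar>alt_weight k r m\<bar> \<le> weight r k m"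
    unfolding alt_weight_def abs_mult by (simp add: mult_left_le)
  also have "\<dots> \<le> scale_factor r k ^ (m - k)"
    using assms(1,3) False by (intro weight_le_scale_factor_power) auto
  finally show ?thesis .
qed

lemma alt_weight_tendsto:
  assumes "1 \<le> k" "1 \<le> m"
  shows "((\<lambda>r. alt_weight k r m) \<longlongrightarrow> (if m = k then 1 else 0)) (at_right 1)"
proof -
  have weights: "((\<lambda>r. \<Prod>j\<in>{1..<k}. 1 - weight r j m) \<longlongrightarrow> (\<Prod>j\<in>{1..<k}. 1 - 0)) (at_right 1)"
    if "k \<le> m"
    using that by (intro tendsto_prod tendsto_diff tendsto_const weight_tendsto_0) auto
  consider "m < k" | "m = k" | "k < m"
    by linarith
  then show ?thesis
  proof cases
    case 1
    have "\<forall>\<^sub>F r in at_right 1. alt_weight k r m = 0"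
      using eventually_at_right_less[of "1::real"]
      by eventually_elim (use 1 assms(2) in \<open>simp add: alt_weight_eq_0\<close>)
    with 1 show ?thesis
      by (simp add: tendsto_eventually)
  next
    case 2
    have "\<forall>\<^sub>F r in at_right 1. alt_weight k r m = (\<Prod>j\<in>{1..<k}. 1 - weight r j m)"
      using eventually_at_right_less[of "1::real"]
      by eventually_elim (use 2 assms in \<open>simp add: alt_weight_def weight_self\<close>)
    with 2 weights show ?thesis
      by (simp add: tendsto_cong)
  next
    case 3
    have "((\<lambda>r. alt_weight k r m) \<longlongrightarrow> 0 * (\<Prod>j\<in>{1..<k}. 1 - 0)) (at_right 1)"
      unfolding alt_weight_def using 3 assms
      by (intro tendsto_mult weights weight_tendsto_0) auto
    with 3 show ?thesis
      by simp
  qed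
qed

lemma alt_weight_series_sums:
  assumes "summable (\<lambda>i. c (Suc i) * x ^ Suc i)" "1 < r" "r ^ k < 2" "1 \<le> k"
  shows "(\<lambda>i. c (Suc i) * x ^ Suc i * alt_weight k r (Suc i))
    sums (\<Sum>S\<in>{S. S \<subseteq> {1..k} \<and> k \<in> S}. (-1) ^ Suc (card S) * log_prod c x r S)"
proof -
  let ?A = "{S. S \<subseteq> {1..k} \<and> k \<in> S}"
  have "(\<lambda>i. c (Suc i) * x ^ Suc i * (\<Prod>j\<in>S. weight r j (Suc i))) sums log_prod c x r S"
    if "S \<in> ?A" for S
  proof -
    have "0 \<le> (\<Prod>j\<in>S. weight r j (Suc i))" for i
      using assms(2) by (intro prod_nonneg weight_nonneg) auto
    then have "summable (\<lambda>i. \<bar>c (Suc i) * x ^ Suc i * (\<Prod>j\<in>S. weight r j (Suc i))\<bar>)"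
      using that summable_abs_mult_prod_weight[OF assms(1-3), of S] by (simp add: abs_mult)
    then show ?thesis
      unfolding log_prod_def by (rule summable_sums [OF summable_rabs_cancel])
  qed
  then have "(\<lambda>i. \<Sum>S\<in>?A. (-1) ^ Suc (card S) * (c (Suc i) * x ^ Suc i * (\<Prod>j\<in>S. weight r j (Suc i))))
      sums (\<Sum>S\<in>?A. (-1) ^ Suc (card S) * log_prod c x r S)"
    by (intro sums_sum sums_mult)
  moreover have "(\<Sum>S\<in>?A. (-1) ^ Suc (card S) * (c (Suc i) * x ^ Suc i * (\<Prod>j\<in>S. weight r j (Suc i))))
      = c (Suc i) * x ^ Suc i * alt_weight k r (Suc i)" for i
  proof -
    have "(\<Sum>S\<in>?A. (-1) ^ Suc (card S) * (c (Suc i) * x ^ Suc i * (\<Prod>j\<in>S. weight r j (Suc i))))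
        = c (Suc i) * x ^ Suc i * (\<Sum>S\<in>?A. (-1) ^ Suc (card S) * (\<Prod>j\<in>S. weight r j (Suc i)))"
      by (simp only: sum_distrib_left mult.left_commute)
    then show ?thesis
      by (simp only: sum_subsets_with_max_alternating_prod[OF assms(4)] alt_weight_def)
  qed
  ultimately show ?thesis
    by simp
qed

lemma alt_weight_series_tendsto:
  fixes d :: "nat \<Rightarrow> real"
  assumes "summable d" "1 \<le> k"
  shows "((\<lambda>r. \<Sum>i. d i * alt_weight k r (Suc i)) \<longlongrightarrow> d (k - 1)) (at_right 1)"
proof -
  have "\<forall>\<^sub>F r in at_right 1. scale_factor r k < 1 / 2"
    using scale_factor_tendsto_0[OF assms(2)] by (rule order_tendstoD(2)) simp
  with eventually_power_less_2_at_right_1[of k]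
  have "\<forall>\<^sub>F r in at_right 1. \<forall>i. norm (d i * alt_weight k r (Suc i)) \<le> \<bar>d i\<bar> * (1 / 2) ^ (i - (k - 1))"
  proof eventually_elim
    case (elim r)
    show ?case
    proof
      fix i
      have "\<bar>alt_weight k r (Suc i)\<bar> \<le> scale_factor r k ^ (Suc i - k)"
        using elim assms(2) by (intro alt_weight_bound) auto
      also have "\<dots> \<le> (1 / 2) ^ (i - (k - 1))"
        using elim scale_factor_pos[of r k] assms(2)
        by (auto intro: power_mono simp: Suc_diff_le)
      finally show "norm (d i * alt_weight k r (Suc i)) \<le> \<bar>d i\<bar> * (1 / 2) ^ (i - (k - 1))"
        by (simp add: abs_mult mult_left_mono)
    qed
  qed
  then have "\<forall>\<^sub>F (i, r) in sequentially \<times>\<^sub>F at_right 1.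
      \<forall>i. norm (d i * alt_weight k r (Suc i)) \<le> \<bar>d i\<bar> * (1 / 2) ^ (i - (k - 1))"
    by (rule eventually_prod2 [OF sequentially_bot, THEN iffD2])
  then have bound: "\<forall>\<^sub>F (i, r) in sequentially \<times>\<^sub>F at_right 1.
      norm (d i * alt_weight k r (Suc i)) \<le> \<bar>d i\<bar> * (1 / 2) ^ (i - (k - 1))"
    by (rule eventually_mono) auto
  have "((\<lambda>r. d i * alt_weight k r (Suc i)) \<longlongrightarrow> (if i = k - 1 then d i else 0)) (at_right 1)" for i
    using tendsto_mult_left[OF alt_weight_tendsto[OF assms(2), of "Suc i"], of "d i"] assms(2)
    by (auto split: if_splits)
  from tannerys_theorem[OF this bound summable_abs_mult_power_diff[OF assms(1)]]
  have "((\<lambda>r. \<Sum>i. d i * alt_weight k r (Suc i)) \<longlongrightarrow> (\<Sum>i. if i = k - 1 then d i else 0)) (at_right 1)"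
    by simp
  then show ?thesis
    using sums_unique[OF sums_single, of d "k - 1"] by simp
qed

lemma alternating_prod_quotient_eq_exp:
  assumes series: "\<forall>y\<in>between0 x. summable (\<lambda>i. c (Suc i) * y ^ Suc i) \<and>
                    f y = exp (\<Sum>i. c (Suc i) * y ^ Suc i)"
    and "1 < r" "r ^ k < 2" "1 \<le> k"
  shows "(\<Prod>S\<in>{S. S \<subseteq> {1..k} \<and> k \<in> S \<and> odd (card S)}. prod_on (\<lambda>n. f (scomp r S n x)) (families S))
      / (\<Prod>S\<in>{S. S \<subseteq> {1..k} \<and> k \<in> S \<and> even (card S)}. prod_on (\<lambda>n. f (scomp r S n x)) (families S))
    = exp (\<Sum>i. c (Suc i) * x ^ Suc i * alt_weight k r (Suc i))"
proof -
  let ?A = "{S. S \<subseteq> {1..k} \<and> k \<in> S}"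
  have "finite ?A"
    by (rule finite_subset[of _ "Pow {1..k}"]) auto
  have summable: "summable (\<lambda>i. c (Suc i) * x ^ Suc i)"
    using series self_in_between0 by blast
  have "prod_on (\<lambda>n. f (scomp r S n x)) (families S) = exp (log_prod c x r S)" if "S \<in> ?A" for S
    using assms that by (intro prod_on_eqI has_prod_on_families[OF series]) auto
  then have prods: "(\<Prod>S\<in>{S. S \<subseteq> {1..k} \<and> k \<in> S \<and> P (card S)}. prod_on (\<lambda>n. f (scomp r S n x)) (families S))
      = (\<Prod>S\<in>{S. (S \<subseteq> {1..k} \<and> k \<in> S) \<and> P (card S)}. exp (log_prod c x r S))" for P
    by (intro prod.cong) auto
  have "(\<Sum>S\<in>?A. (-1) ^ Suc (card S) * log_prod c x r S)
      = (\<Sum>i. c (Suc i) * x ^ Suc i * alt_weight k r (Suc i))"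
    using assms by (intro sums_unique alt_weight_series_sums summable) auto
  with prod_odd_div_prod_even_exp[OF \<open>finite ?A\<close>, of "log_prod c x r"] show ?thesis
    using prods[of odd] prods[of even] by simp
qed

theorem lemma4:
  fixes f :: "real \<Rightarrow> real" and c :: "nat \<Rightarrow> real" and x :: real and k :: nat
  assumes analytic: "real_analytic_on f (between0 x)"
    and nonzero: "\<forall>y\<in>between0 x. f y \<noteq> 0"
    and f0: "f 0 = 1"
    and series: "\<forall>y\<in>between0 x. summable (\<lambda>i. c (Suc i) * y ^ Suc i) \<and>
                    f y = exp (\<Sum>i. c (Suc i) * y ^ Suc i)"
    and k: "k \<ge> 1"
  shows "(\<forall>\<^sub>F r in at_right 1. \<forall>S. S \<subseteq> {1..k} \<and> k \<in> S \<longrightarrow>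
            (\<exists>P. has_prod_on (\<lambda>n. f (scomp r S n x)) (families S) P))
       \<and> ((\<lambda>r. (\<Prod>S\<in>{S. S \<subseteq> {1..k} \<and> k \<in> S \<and> odd (card S)}.
                    prod_on (\<lambda>n. f (scomp r S n x)) (families S))
              / (\<Prod>S\<in>{S. S \<subseteq> {1..k} \<and> k \<in> S \<and> even (card S)}.
                    prod_on (\<lambda>n. f (scomp r S n x)) (families S)))
          \<longlongrightarrow> exp (c k * x ^ k)) (at_right 1)"
proof -
  note near = eventually_power_less_2_at_right_1[of k]
  have summable: "summable (\<lambda>i. c (Suc i) * x ^ Suc i)"
    using series self_in_between0 by blast
  have limit: "((\<lambda>r. exp (\<Sum>i. c (Suc i) * x ^ Suc i * alt_weight k r (Suc i)))
      \<longlongrightarrow> exp (c k * x ^ k)) (at_right 1)"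
    using tendsto_exp[OF alt_weight_series_tendsto[OF summable k]] k by simp
  have quotient: "\<forall>\<^sub>F r in at_right 1.
      exp (\<Sum>i. c (Suc i) * x ^ Suc i * alt_weight k r (Suc i)) =
      (\<Prod>S\<in>{S. S \<subseteq> {1..k} \<and> k \<in> S \<and> odd (card S)}. prod_on (\<lambda>n. f (scomp r S n x)) (families S))
      / (\<Prod>S\<in>{S. S \<subseteq> {1..k} \<and> k \<in> S \<and> even (card S)}. prod_on (\<lambda>n. f (scomp r S n x)) (families S))"
    using near by eventually_elim (rule alternating_prod_quotient_eq_exp [OF series _ _ k, symmetric], auto)
  have "\<forall>\<^sub>F r in at_right 1. \<forall>S. S \<subseteq> {1..k} \<and> k \<in> S \<longrightarrow>
      (\<exists>P. has_prod_on (\<lambda>n. f (scomp r S n x)) (families S) P)"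
    using near by eventually_elim (use has_prod_on_families[OF series] in blast)
  with Lim_transform_eventually[OF limit quotient] show ?thesis
    by blast
qed

end
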